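(* For every integer $n\ge0$, $$\sum_{k=0}^{n}\lambda^{n-k}B^{(c)}_{k,\lambda}(x,y)S_2(n,k)=\sum_{m=0}^{n}\sum_{l=0}^{\lfloor m/2\rfloor}\frac{\lambda^{n-m}}{n-m+1}\binom{n}{m}\binom{m}{2l}(-1)^l y^{2l}B_{m-2l}(x).$$
   Context: Let $\lambda$ be a nonzero real number; generating functions are formal power series in $t$. $e_\lambda^{x}(t)=(1+\lambda t)^{x/\lambda}$ and $\cos_\lambda^{(y)}(t)=\cos\!\big(\tfrac{y}{\lambda}\log(1+\lambda t)\big)$. The type 2 degenerate cosine-Bernoulli polynomials are defined by $\frac{t}{e_\lambda^{1/2}(t)-e_\lambda^{-1/2}(t)}e_\lambda^{x}(t)\cos_\lambda^{(y)}(t)=\sum_{n\ge0}B^{(c)}_{n,\lambda}(x,y)\frac{t^n}{n!}$. The (non-degenerate) type 2 Bernoulli polynomials are defined by $\frac{t}{e^{t/2}-e^{-t/2}}e^{xt}=\sum_{n\ge0}B_n(x)\frac{t^n}{n!}$. $S_2(n,k)$ are the Stirling numbers of the second kind, $\frac{1}{k!}(e^t-1)^k=\sum_{n\ge k}S_2(n,k)\frac{t^n}{n!}$. *)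

theory Defs
  imports "HOL-Computational_Algebra.Formal_Power_Series" "HOL-Combinatorics.Stirling"
begin

definition deg_exp :: "real \<Rightarrow> real \<Rightarrow> real fps" where
  "deg_exp lam x = fps_binomial (x / lam) oo (fps_const lam * fps_X)"

definition deg_cos :: "real \<Rightarrow> real \<Rightarrow> real fps" where
  "deg_cos lam y = fps_cos (y / lam) oo (fps_ln 1 oo (fps_const lam * fps_X))"

definition deg_cos_bernoulli :: "real \<Rightarrow> nat \<Rightarrow> real \<Rightarrow> real \<Rightarrow> real" where
  "deg_cos_bernoulli lam n x y =
     fact n * fps_nth (fps_X / (deg_exp lam (1/2) - deg_exp lam (-1/2))
                 * deg_exp lam x * deg_cos lam y) n"

definition bernoulli2 :: "nat \<Rightarrow> real \<Rightarrow> real" where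
  "bernoulli2 n x =
     fact n * fps_nth (fps_X / (fps_exp (1/2) - fps_exp (-1/2)) * fps_exp x) n"

end

theory Submission
  imports Defs
begin

text \<open>Substitute T(t) = (exp(\<lambda>t) - 1)/\<lambda>, the compositional inverse of log(1 + \<lambda>t)/\<lambda>,
  into the generating function of the degenerate cosine-Bernoulli polynomials. Since 1 + \<lambda>T = exp(\<lambda>t),
  every degenerate exponential and cosine turns into an ordinary one, and the degenerate Bernoulli
  kernel into t/(exp(t/2) - exp(-t/2)) \<cdot> (exp(\<lambda>t) - 1)/(\<lambda>t).
  The n-th coefficient of the composite is the Stirling sum on the left, because
  T^k = \<lambda>^(-k) (exp(\<lambda>t) - 1)^k; the same coefficient of the ordinary product
  cos(yt) \<cdot> (Bernoulli generating function) \<cdot> (exp(\<lambda>t) - 1)/(\<lambda>t) is, by two Cauchy products,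
  the right-hand side.\<close>

unbundle fps_syntax

lemma fact_nth_exp_minus_one_power:
  fixes c :: "'a :: field_char_0"
  shows "fact n * ((fps_exp c - 1) ^ k) $ n = c ^ n * fact k * of_nat (Stirling n k)"
proof (induction n arbitrary: k)
  case 0
  then show ?case by (cases k) (simp_all add: fps_nth_power_0)
next
  case (Suc n)
  show ?case
  proof (cases k)
    case 0
    then show ?thesis by simp
  next
    case (Suc j)
    let ?E = "fps_exp c - 1"
    \<comment> \<open>Comparing coefficients of the derivative of ?E ^ Suc j yields the Stirling recurrence.\<close>
    have "fps_deriv (?E ^ Suc j) = fps_const (of_nat (Suc j)) * (fps_const c * fps_exp c) * ?E ^ j"
      by (simp add: fps_deriv_power del: power_Suc)
    also have "\<dots> = fps_const (of_nat (Suc j) * c) * (?E ^ Suc j + ?E ^ j)"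
      by (subst diff_add_cancel[of "fps_exp c" 1, symmetric]) (simp add: algebra_simps)
    finally have "fps_deriv (?E ^ Suc j) = fps_const (of_nat (Suc j) * c) * (?E ^ Suc j + ?E ^ j)" .
    then have step: "of_nat (n + 1) * (?E ^ Suc j) $ (n + 1) = of_nat (Suc j) * c * ((?E ^ Suc j) $ n + (?E ^ j) $ n)"
      by (metis fps_deriv_nth fps_mult_left_const_nth fps_add_nth)
    have "fact (Suc n) * (?E ^ Suc j) $ Suc n = fact n * (of_nat (n + 1) * (?E ^ Suc j) $ (n + 1))"
      by (simp del: power_Suc add: mult_ac)
    also have "\<dots> = of_nat (Suc j) * c * (fact n * (?E ^ Suc j) $ n + fact n * (?E ^ j) $ n)"
      by (simp only: step ring_distribs mult_ac)
    also have "\<dots> = c ^ Suc n * fact (Suc j) * of_nat (Stirling (Suc n) (Suc j))"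
      unfolding Suc.IH by (simp add: algebra_simps)
    finally show ?thesis using Suc by simp
  qed
qed

lemma fps_binomial_compose_exp_minus_one:
  fixes a c :: "'a :: field_char_0"
  shows "fps_binomial a oo (fps_exp c - 1) = fps_exp (a * c)"
proof -
  let ?E = "fps_exp c - 1"
  have E0: "?E $ 0 = 0" by simp
  have one: "(1 + fps_X) oo ?E = fps_exp c"
    using E0 by (simp add: fps_compose_add_distrib)
  \<comment> \<open>Both sides solve f' = a c f with f(0) = 1.\<close>
  have "fps_deriv (fps_binomial a oo ?E) = (fps_deriv (fps_binomial a) oo ?E) * fps_deriv ?E"
    by (rule fps_compose_deriv[OF E0])
  also have "\<dots> = ((fps_const a * fps_binomial a) oo ?E) / ((1 + fps_X) oo ?E) * (fps_const c * fps_exp c)"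
    by (simp add: fps_binomial_deriv fps_divide_compose[OF E0])
  also have "\<dots> = fps_const (a * c) * (fps_binomial a oo ?E)"
    unfolding one using E0 by (simp add: fps_compose_mult_distrib fps_divide_unit inverse_mult_eq_1' field_simps)
  finally have "fps_binomial a oo ?E = fps_const ((fps_binomial a oo ?E) $ 0) * fps_exp (a * c)"
    using fps_exp_unique_ODE by blast
  then show ?thesis by simp
qed

lemma fps_ln_compose_exp_minus_one:
  fixes c :: "'a :: field_char_0"
  shows "fps_ln 1 oo (fps_exp c - 1) = fps_const c * fps_X"
proof -
  let ?E = "fps_exp (1 :: 'a) - 1"
  have inv: "fps_inv ?E = fps_ln 1"
    using fps_ln_fps_exp_inv[of "1::'a"] by simp
  have inverse: "fps_ln 1 oo ?E = fps_X"
    using fps_inv_right[of "fps_inv ?E"] fps_inv_idempotent[of ?E] by (simp add: inv fps_ln_nth)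
  have "fps_exp c - 1 = ?E oo (fps_const c * fps_X)"
    by (simp add: fps_compose_sub_distrib)
  then have "fps_ln 1 oo (fps_exp c - 1) = (fps_ln 1 oo ?E) oo (fps_const c * fps_X)"
    by (simp add: fps_compose_assoc)
  then show ?thesis
    by (simp add: inverse)
qed

lemma fps_X_div_mult_cancel:
  fixes D :: "'a :: field fps"
  assumes "D $ 0 = 0" "D $ 1 \<noteq> 0"
  shows "fps_X / D * D = fps_X"
proof -
  have "D \<noteq> 0" using assms by auto
  moreover have "subdegree D \<le> 1" using assms by (intro subdegree_leI) simp
  ultimately have "D dvd fps_X" by (subst fps_dvd_iff) simp_all
  then show ?thesis by simp
qed

definition deg_log_inv :: "'a :: field_char_0 \<Rightarrow> 'a fps" where
  "deg_log_inv lam = fps_const (1 / lam) * (fps_exp lam - 1)"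

lemma deg_log_inv_nth_0 [simp]: "deg_log_inv lam $ 0 = 0"
  by (simp add: deg_log_inv_def)

lemma deg_log_inv_eq_X_mult:
  assumes "lam \<noteq> 0"
  shows "deg_log_inv lam = fps_X * Abs_fps (\<lambda>j. lam ^ j / fact (Suc j))"
proof (rule fps_ext)
  fix n show "deg_log_inv lam $ n = (fps_X * Abs_fps (\<lambda>j. lam ^ j / fact (Suc j))) $ n"
    using assms by (cases n) (simp_all add: deg_log_inv_def algebra_simps)
qed

lemma scaled_X_compose_deg_log_inv:
  assumes "lam \<noteq> 0"
  shows "fps_const lam * fps_X oo deg_log_inv lam = fps_exp lam - 1"
  using assms by (simp add: fps_compose_mult_distrib deg_log_inv_def)

lemma fact_nth_compose_deg_log_inv:
  assumes "lam \<noteq> 0"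
  shows "fact n * (F oo deg_log_inv lam) $ n
       = (\<Sum>k=0..n. lam ^ (n - k) * (fact k * F $ k) * of_nat (Stirling n k))"
proof -
  have "fact n * (F oo deg_log_inv lam) $ n = (\<Sum>k=0..n. F $ k * (fact n * (deg_log_inv lam ^ k) $ n))"
    by (simp add: fps_compose_nth sum_distrib_left mult_ac)
  also have "\<dots> = (\<Sum>k=0..n. lam ^ (n - k) * (fact k * F $ k) * of_nat (Stirling n k))"
  proof (rule sum.cong[OF refl])
    fix k assume "k \<in> {0..n}"
    then have "lam ^ n = lam ^ k * lam ^ (n - k)"
      by (simp flip: power_add)
    moreover have "deg_log_inv lam ^ k = fps_const ((1 / lam) ^ k) * (fps_exp lam - 1) ^ k"
      by (simp add: deg_log_inv_def power_mult_distrib fps_const_power)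
    ultimately show "F $ k * (fact n * (deg_log_inv lam ^ k) $ n)
        = lam ^ (n - k) * (fact k * F $ k) * of_nat (Stirling n k)"
      using assms by (simp add: mult.left_commute[of "fact n"] fact_nth_exp_minus_one_power
                                power_one_over field_simps)
  qed
  finally show ?thesis .
qed

lemma fact_nth_mult_exp_quotient:
  fixes c :: "'a :: field_char_0"
  shows "fact n * (A * Abs_fps (\<lambda>j. c ^ j / fact (Suc j))) $ n
       = (\<Sum>m=0..n. c ^ (n - m) / of_nat (n - m + 1) * of_nat (n choose m) * (fact m * A $ m))"
  unfolding fps_mult_nth sum_distrib_left
proof (rule sum.cong[OF refl])
  fix m assume "m \<in> {0..n}"
  then have "(fact n :: 'a) = fact m * fact (n - m) * of_nat (n choose m)"
    by (metis binomial_fact_lemma atLeastAtMost_iff of_nat_fact of_nat_mult)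
  moreover have "(fact (Suc (n - m)) :: 'a) = of_nat (n - m + 1) * fact (n - m)"
    by simp
  ultimately show "fact n * (A $ m * Abs_fps (\<lambda>j. c ^ j / fact (Suc j)) $ (n - m))
      = c ^ (n - m) / of_nat (n - m + 1) * of_nat (n choose m) * (fact m * A $ m)"
    by (simp add: field_simps del: of_nat_add of_nat_Suc fact_Suc)
qed

lemma fact_nth_fps_cos_mult:
  fixes y :: "'a :: field_char_0"
  shows "fact m * (fps_cos y * H) $ m =
     (\<Sum>l=0..m div 2. of_nat (m choose (2 * l)) * (-1) ^ l * y ^ (2 * l) * (fact (m - 2 * l) * H $ (m - 2 * l)))"
proof -
  define g where "g i = of_nat (m choose i) * (-1) ^ (i div 2) * y ^ i * (fact (m - i) * H $ (m - i))" for i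
  have "fact m * (fps_cos y * H) $ m = (\<Sum>i=0..m. if even i then g i else 0)"
    unfolding fps_mult_nth sum_distrib_left
  proof (rule sum.cong[OF refl])
    fix i assume "i \<in> {0..m}"
    then have "(fact m :: 'a) = fact i * fact (m - i) * of_nat (m choose i)"
      by (metis binomial_fact_lemma atLeastAtMost_iff of_nat_fact of_nat_mult)
    then show "fact m * (fps_cos y $ i * H $ (m - i)) = (if even i then g i else 0)"
      by (simp add: fps_cos_def g_def field_simps)
  qed
  also have "\<dots> = sum g {i \<in> {0..m}. even i}"
    by (rule sum.inter_filter[symmetric]) simp
  also have "{i \<in> {0..m}. even i} = (\<lambda>l. 2 * l) ` {0..m div 2}"
    by (auto elim!: evenE)
  also have "sum g \<dots> = (\<Sum>l=0..m div 2. g (2 * l))"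
    by (simp add: sum.reindex inj_on_def)
  finally show ?thesis
    by (simp add: g_def)
qed

lemma deg_exp_nth: "deg_exp lam a $ n = lam ^ n * ((a / lam) gchoose n)"
  by (simp add: deg_exp_def fps_compose_linear)

lemma deg_exp_compose_deg_log_inv:
  assumes "lam \<noteq> 0"
  shows "deg_exp lam a oo deg_log_inv lam = fps_exp a"
proof -
  have "deg_exp lam a oo deg_log_inv lam
      = fps_binomial (a / lam) oo (fps_const lam * fps_X oo deg_log_inv lam)"
    unfolding deg_exp_def by (simp add: fps_compose_assoc)
  also have "\<dots> = fps_exp a"
    using assms by (simp add: scaled_X_compose_deg_log_inv fps_binomial_compose_exp_minus_one)
  finally show ?thesis .
qed

lemma deg_cos_compose_deg_log_inv:
  assumes "lam \<noteq> 0"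
  shows "deg_cos lam y oo deg_log_inv lam = fps_cos y"
proof -
  have "deg_cos lam y oo deg_log_inv lam
      = fps_cos (y / lam) oo (fps_ln 1 oo (fps_const lam * fps_X oo deg_log_inv lam))"
    unfolding deg_cos_def by (simp add: fps_compose_assoc)
  also have "\<dots> = fps_cos (y / lam) oo (fps_const lam * fps_X)"
    using assms by (simp add: scaled_X_compose_deg_log_inv fps_ln_compose_exp_minus_one)
  also have "\<dots> = fps_cos y"
    using assms by (simp add: fps_compose_linear fps_cos_def fps_eq_iff power_divide)
  finally show ?thesis .
qed

lemma deg_bernoulli_kernel_compose_deg_log_inv:
  assumes "lam \<noteq> 0"
  shows "fps_X / (deg_exp lam (1/2) - deg_exp lam (-1/2)) oo deg_log_inv lam
       = fps_X / (fps_exp (1/2) - fps_exp (-1/2)) * Abs_fps (\<lambda>j. lam ^ j / fact (Suc j))"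
proof -
  define D where "D = deg_exp lam (1/2) - deg_exp lam (-1/2)"
  define E :: "real fps" where "E = fps_exp (1/2) - fps_exp (-1/2)"
  have D: "D $ 0 = 0" "D $ 1 \<noteq> 0" and E: "E $ 0 = 0" "E $ 1 \<noteq> 0"
    using assms by (simp_all add: D_def E_def deg_exp_nth)
  have "D oo deg_log_inv lam = E"
    using assms by (simp add: D_def E_def fps_compose_sub_distrib deg_exp_compose_deg_log_inv)
  then have "(fps_X / D oo deg_log_inv lam) * E = (fps_X / D * D) oo deg_log_inv lam"
    by (simp add: fps_compose_mult_distrib)
  also have "\<dots> = fps_X * Abs_fps (\<lambda>j. lam ^ j / fact (Suc j))"
    using D assms by (simp add: fps_X_div_mult_cancel deg_log_inv_eq_X_mult)
  also have "\<dots> = fps_X / E * E * Abs_fps (\<lambda>j. lam ^ j / fact (Suc j))"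
    by (simp only: fps_X_div_mult_cancel[OF E])
  also have "\<dots> = fps_X / E * Abs_fps (\<lambda>j. lam ^ j / fact (Suc j)) * E"
    by (simp only: mult_ac)
  finally show ?thesis
    using E by (simp add: D_def E_def)
qed

definition deg_cos_bernoulli_fps :: "real \<Rightarrow> real \<Rightarrow> real \<Rightarrow> real fps" where
  "deg_cos_bernoulli_fps lam x y =
     fps_X / (deg_exp lam (1/2) - deg_exp lam (-1/2)) * deg_exp lam x * deg_cos lam y"

definition bernoulli2_fps :: "real \<Rightarrow> real fps" where
  "bernoulli2_fps x = fps_X / (fps_exp (1/2) - fps_exp (-1/2)) * fps_exp x"

lemma deg_cos_bernoulli_conv_fps: "deg_cos_bernoulli lam n x y = fact n * deg_cos_bernoulli_fps lam x y $ n"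
  by (simp add: deg_cos_bernoulli_def deg_cos_bernoulli_fps_def)

lemma bernoulli2_conv_fps: "bernoulli2 n x = fact n * bernoulli2_fps x $ n"
  by (simp add: bernoulli2_def bernoulli2_fps_def)

lemma deg_cos_bernoulli_fps_compose_deg_log_inv:
  assumes "lam \<noteq> 0"
  shows "deg_cos_bernoulli_fps lam x y oo deg_log_inv lam
       = fps_cos y * bernoulli2_fps x * Abs_fps (\<lambda>j. lam ^ j / fact (Suc j))"
  unfolding deg_cos_bernoulli_fps_def bernoulli2_fps_def
  by (simp only: fps_compose_mult_distrib deg_log_inv_nth_0
      deg_bernoulli_kernel_compose_deg_log_inv[OF assms] deg_exp_compose_deg_log_inv[OF assms]
      deg_cos_compose_deg_log_inv[OF assms] mult_ac)

theorem theorem2p5: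
  fixes lam x y :: real and n :: nat
  assumes "lam \<noteq> 0"
  shows "(\<Sum>k=0..n. lam ^ (n - k) * deg_cos_bernoulli lam k x y * real (Stirling n k)) =
         (\<Sum>m=0..n. \<Sum>l=0..m div 2.
            lam ^ (n - m) / real (n - m + 1) * real (n choose m) * real (m choose (2 * l))
            * (-1) ^ l * y ^ (2 * l) * bernoulli2 (m - 2 * l) x)"
proof -
  have "(\<Sum>k=0..n. lam ^ (n - k) * deg_cos_bernoulli lam k x y * real (Stirling n k))
      = fact n * (deg_cos_bernoulli_fps lam x y oo deg_log_inv lam) $ n"
    using assms by (simp add: fact_nth_compose_deg_log_inv deg_cos_bernoulli_conv_fps)
  also have "\<dots> = fact n * (fps_cos y * bernoulli2_fps x * Abs_fps (\<lambda>j. lam ^ j / fact (Suc j))) $ n"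
    using assms by (simp add: deg_cos_bernoulli_fps_compose_deg_log_inv)
  also have "\<dots> = (\<Sum>m=0..n. lam ^ (n - m) / real (n - m + 1) * real (n choose m)
                      * (fact m * (fps_cos y * bernoulli2_fps x) $ m))"
    by (rule fact_nth_mult_exp_quotient)
  also have "\<dots> = (\<Sum>m=0..n. \<Sum>l=0..m div 2.
            lam ^ (n - m) / real (n - m + 1) * real (n choose m) * real (m choose (2 * l))
            * (-1) ^ l * y ^ (2 * l) * bernoulli2 (m - 2 * l) x)"
    unfolding fact_nth_fps_cos_mult bernoulli2_conv_fps by (simp add: sum_distrib_left mult_ac)
  finally show ?thesis .
qed

end
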